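(* Let $d\ge2$, let $A,B$ be $d$-dimensional systems, let $\Phi=|\phi\rangle\langle\phi|$ with $|\phi\rangle=\frac1{\sqrt d}\sum_{i=1}^d|i\rangle_A|i\rangle_B$, and for $0\le\lambda\le1$ let $\rho_{AB}=\lambda\Phi+\frac{1-\lambda}{d^2-1}(\mathbb I-\Phi)$ (an isotropic state). Then $$Q^A_{\mathcal N}(\rho_{AB})=Q^{AB}_{\mathcal N}(\rho_{AB})=\frac{|\lambda d^2-1|}{2(d+1)}.$$
   Context: The negativity of a bipartite state $\tau_{X:Y}$ is $\mathcal N_{X:Y}(\tau)=(\|\tau^\Gamma\|_1-1)/2$ with $\tau^\Gamma$ the partial transpose on one party and $\|\cdot\|_1$ the trace norm. For a system $S$ of dimension $m$ with orthonormal basis $\{|s_k\rangle\}$, the measurement interaction is the isometry $V_S:S\to S\otimes S'$ ($S'$ $m$-dimensional with computational basis $\{|k\rangle\}$), $V_S|s_k\rangle=|s_k\rangle|k\rangle$. One-sided negativity of quantumness: $Q^A_{\mathcal N}(\rho_{AB})=\min\mathcal N_{AB:A'}\big((V_A\otimes\mathbb I_B)\rho_{AB}(V_A\otimes\mathbb I_B)^\dagger\big)$ over orthonormal bases of $A$. Two-sided: $Q^{AB}_{\mathcal N}(\rho_{AB})=\min\mathcal N_{AB:A'B'}\big((V_A\otimes V_B)\rho_{AB}(V_A\otimes V_B)^\dagger\big)$ over orthonormal bases of $A$ and $B$. *)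

theory Defs
  imports Complex_Main "Jordan_Normal_Form.Char_Poly" "HOL-Computational_Algebra.Polynomial"
begin

text \<open>Conventions. A d-dimensional system has computational basis indexed by 0..d-1.
  A composite system X Y (dims n, m) uses the index x*m + y.
  Matrices are complex JNF matrices.\<close>

definition adj :: "complex mat \<Rightarrow> complex mat" where
  "adj M = mat (dim_col M) (dim_row M) (\<lambda>(i,j). cnj (M $$ (j,i)))"

text \<open>Trace norm = sum of singular values = sum of square roots of the eigenvalues
  (with multiplicity) of adj M * M.\<close>
definition trace_norm :: "complex mat \<Rightarrow> real" where
  "trace_norm M = (\<Sum>z\<in>#proots (char_poly (adj M * M)). sqrt (Re z))"

text \<open>Partial transpose on the second party of a bipartite (n*m)-dimensional matrix.\<close>
definition ptrans :: "nat \<Rightarrow> nat \<Rightarrow> complex mat \<Rightarrow> complex mat" where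
  "ptrans n m M = mat (n*m) (n*m)
     (\<lambda>(r,c). M $$ ((r div m) * m + c mod m, (c div m) * m + r mod m))"

definition negativity :: "nat \<Rightarrow> nat \<Rightarrow> complex mat \<Rightarrow> real" where
  "negativity n m \<tau> = (trace_norm (ptrans n m \<tau>) - 1) / 2"

text \<open>An orthonormal basis of C^d: vectors s_k (k < d) with components u k a (a < d).\<close>
definition onb :: "nat \<Rightarrow> (nat \<Rightarrow> nat \<Rightarrow> complex) \<Rightarrow> bool" where
  "onb d u \<longleftrightarrow> (\<forall>k<d. \<forall>l<d. (\<Sum>a<d. cnj (u k a) * u l a) = (if k = l then 1 else 0))"

text \<open>V_A \<otimes> I_B : A B \<rightarrow> A B A', with V_A |s_k> = |s_k>|k>, output ordered as A B A'
  (index (a*d+b)*d+k), input index x*d+y.\<close>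
definition VA :: "nat \<Rightarrow> (nat \<Rightarrow> nat \<Rightarrow> complex) \<Rightarrow> complex mat" where
  "VA d u = mat (d*d*d) (d*d) (\<lambda>(r,c).
     let a = r div d div d; b = r div d mod d; k = r mod d; x = c div d; y = c mod d in
     u k a * cnj (u k x) * (if b = y then 1 else 0))"

text \<open>V_A \<otimes> V_B : A B \<rightarrow> A B A' B', output index (a*d+b)*(d*d) + (k*d+l).\<close>
definition VAB :: "nat \<Rightarrow> (nat \<Rightarrow> nat \<Rightarrow> complex) \<Rightarrow> (nat \<Rightarrow> nat \<Rightarrow> complex) \<Rightarrow> complex mat" where
  "VAB d u v = mat (d*d*d*d) (d*d) (\<lambda>(r,c).
     let ab = r div (d*d); kl = r mod (d*d);
         a = ab div d; b = ab mod d; k = kl div d; l = kl mod d; x = c div d; y = c mod d in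
     u k a * cnj (u k x) * v l b * cnj (v l y))"

text \<open>One-sided negativity of quantumness: negativity across AB : A'.\<close>
definition Q_A :: "nat \<Rightarrow> complex mat \<Rightarrow> real" where
  "Q_A d \<rho> = (INF u\<in>{u. onb d u}. negativity (d*d) d (VA d u * \<rho> * adj (VA d u)))"

text \<open>Two-sided negativity of quantumness: negativity across AB : A'B'.\<close>
definition Q_AB :: "nat \<Rightarrow> complex mat \<Rightarrow> real" where
  "Q_AB d \<rho> = (INF uv\<in>{(u,v). onb d u \<and> onb d v}.
      negativity (d*d) (d*d) (VAB d (fst uv) (snd uv) * \<rho> * adj (VAB d (fst uv) (snd uv))))"

definition phi :: "nat \<Rightarrow> complex vec" where
  "phi d = vec (d*d) (\<lambda>r. if r div d = r mod d then complex_of_real (1 / sqrt (real d)) else 0)"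

definition Phi :: "nat \<Rightarrow> complex mat" where
  "Phi d = mat (d*d) (d*d) (\<lambda>(r,c). phi d $ r * cnj (phi d $ c))"

definition isotropic :: "nat \<Rightarrow> real \<Rightarrow> complex mat" where
  "isotropic d p = complex_of_real p \<cdot>\<^sub>m Phi d
     + complex_of_real ((1 - p) / (real d ^ 2 - 1)) \<cdot>\<^sub>m (1\<^sub>m (d*d) - Phi d)"

end

theory Submission
  imports Defs
begin

text \<open>Measuring \<open>A\<close> (or both parties) in orthonormal bases and partially transposing turns the
  isotropic state into a matrix which, after conjugation by a suitable product unitary, has a single
  nonzero entry in each column, placed along an injection of the index set. Such a monomial matrix has
  orthogonal columns, so its trace norm is the sum of the moduli of these entries. For one-sided
  measurement this sum does not depend on the basis. For two-sided measurement in bases \<open>u\<close>, \<open>v\<close> it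
  equals \<open>1 + \<bar>g\<bar> ((\<Sum>\<^sub>k\<^sub>l \<bar>\<langle>u\<^sub>k v\<^sub>l|\<psi>\<rangle>\<bar>)\<^sup>2 - d)\<close> with \<open>\<psi> = \<Sum>\<^sub>x |x x\<rangle>\<close> and \<open>g\<close> the weight
  of \<open>\<psi>\<psi>\<^sup>\<dagger>\<close> in the state. Every row of overlaps \<open>\<langle>u\<^sub>k v\<^sub>l|\<psi>\<rangle>\<close> has unit norm, so the overlap sum is
  at least \<open>d\<close>, with equality for the computational bases.\<close>

section \<open>Trace norm\<close>

lemma adj_carrier_mat [simp]: "M \<in> carrier_mat n m \<Longrightarrow> adj M \<in> carrier_mat m n"
  by (simp add: adj_def)

lemma dim_adj [simp]: "dim_row (adj M) = dim_col M" "dim_col (adj M) = dim_row M"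
  by (simp_all add: adj_def)

lemma index_adj [simp]: "i < dim_col M \<Longrightarrow> j < dim_row M \<Longrightarrow> adj M $$ (i,j) = cnj (M $$ (j,i))"
  by (simp add: adj_def)

lemma adj_adj [simp]: "adj (adj M) = M"
  by (rule eq_matI) auto

lemma adj_mult: "A \<in> carrier_mat n k \<Longrightarrow> B \<in> carrier_mat k m \<Longrightarrow> adj (A * B) = adj B * adj A"
  by (rule eq_matI) (auto simp: scalar_prod_def mult.commute)

lemma ptrans_carrier: "ptrans n m M \<in> carrier_mat (n*m) (n*m)"
  by (simp add: ptrans_def)

lemma trace_norm_unitary_conj:
  assumes M: "M \<in> carrier_mat n n" and W: "W \<in> carrier_mat n n" and unitary: "adj W * W = 1\<^sub>m n"
  shows "trace_norm (adj W * M * W) = trace_norm M"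
proof -
  have aW: "adj W \<in> carrier_mat n n" using W by simp
  have unitary': "W * adj W = 1\<^sub>m n" using mat_mult_left_right_inverse[OF aW W unitary] .
  note assoc = assoc_mult_mat[of _ n n _ n _ n]
  have closed: "X * Y \<in> carrier_mat n n" if "X \<in> carrier_mat n n" "Y \<in> carrier_mat n n" for X Y
    using that by (rule mult_carrier_mat)
  have "adj (adj W * M * W) * (adj W * M * W) = adj W * (adj M * ((W * adj W) * (M * W)))"
    using M W aW by (simp add: adj_mult[of _ n n _ n] assoc closed)
  also have "\<dots> = adj W * (adj M * M) * W"
    using M W aW unitary' by (simp add: assoc closed)
  finally have gram: "adj (adj W * M * W) * (adj W * M * W) = adj W * (adj M * M) * W" .
  have "W * (adj W * (adj M * M) * W) * adj W = (W * adj W) * (adj M * M) * (W * adj W)"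
    using M W aW by (simp add: assoc closed)
  then have "adj M * M = W * (adj W * (adj M * M) * W) * adj W"
    using M unitary' by simp
  then have "similar_mat (adj M * M) (adj (adj W * M * W) * (adj W * M * W))"
    unfolding gram using M W aW unitary unitary'
    by (intro similar_matI[where n = n and P = W and Q = "adj W"]) (auto simp: mult_carrier_mat)
  then show ?thesis
    unfolding trace_norm_def by (simp add: char_poly_similar)
qed

lemma proots_prod_list_linear: "proots (\<Prod>a\<leftarrow>xs. [:- a, 1::complex:]) = mset xs"
proof (induction xs)
  case (Cons x xs)
  have "(\<Prod>a\<leftarrow>xs. [:- a, 1::complex:]) \<noteq> 0"
    by (auto simp: prod_list_zero_iff)
  then have "proots ([:- x, 1:] * (\<Prod>a\<leftarrow>xs. [:- a, 1::complex:]))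
      = proots [:- x, 1:] + proots (\<Prod>a\<leftarrow>xs. [:- a, 1::complex:])"
    by (intro proots_mult) auto
  then show ?case
    using Cons by simp
qed simp

lemma trace_norm_diagonal_gram:
  assumes N: "N \<in> carrier_mat n n"
    and gram: "adj N * N = mat n n (\<lambda>(r,s). if r = s then complex_of_real ((c r)\<^sup>2) else 0)"
    and nonneg: "\<And>r. r < n \<Longrightarrow> c r \<ge> 0"
  shows "trace_norm N = (\<Sum>r<n. c r)"
proof -
  let ?D = "mat n n (\<lambda>(r,s). if r = s then complex_of_real ((c r)\<^sup>2) else 0)"
  have "char_poly (adj N * N) = (\<Prod>a\<leftarrow>diag_mat ?D. [:- a, 1:])"
    unfolding gram by (rule char_poly_upper_triangular) (auto simp: upper_triangular_def)
  also have "diag_mat ?D = map (\<lambda>r. complex_of_real ((c r)\<^sup>2)) [0..<n]"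
    unfolding diag_mat_def by (rule nth_equalityI) auto
  finally have "proots (char_poly (adj N * N)) = mset (map (\<lambda>r. complex_of_real ((c r)\<^sup>2)) [0..<n])"
    by (simp only: proots_prod_list_linear)
  then have "trace_norm N = (\<Sum>z\<in>#mset (map (\<lambda>r. complex_of_real ((c r)\<^sup>2)) [0..<n]). sqrt (Re z))"
    unfolding trace_norm_def by (rule arg_cong)
  also have "\<dots> = (\<Sum>r<n. sqrt ((c r)\<^sup>2))"
    by (induction n) (auto simp: add.commute)
  also have "\<dots> = (\<Sum>r<n. c r)"
    using nonneg by simp
  finally show ?thesis .
qed

section \<open>Matrices indexed by tuples\<close>

definition coded_mat :: "nat \<Rightarrow> (nat \<Rightarrow> 'i) \<Rightarrow> ('i \<Rightarrow> 'i \<Rightarrow> complex) \<Rightarrow> complex mat" where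
  "coded_mat n dec F = mat n n (\<lambda>(r,c). F (dec r) (dec c))"

lemma coded_mat_carrier [simp]: "coded_mat n dec F \<in> carrier_mat n n"
  by (simp add: coded_mat_def)

lemma dim_coded_mat [simp]: "dim_row (coded_mat n dec F) = n" "dim_col (coded_mat n dec F) = n"
  by (simp_all add: coded_mat_def)

lemma index_coded_mat [simp]: "r < n \<Longrightarrow> c < n \<Longrightarrow> coded_mat n dec F $$ (r,c) = F (dec r) (dec c)"
  by (simp add: coded_mat_def)

lemma adj_coded_mat: "adj (coded_mat n dec F) = coded_mat n dec (\<lambda>x y. cnj (F y x))"
  by (rule eq_matI) auto

lemma coded_mat_mult:
  assumes "bij_betw dec {..<n} I"
  shows "coded_mat n dec F * coded_mat n dec G = coded_mat n dec (\<lambda>x y. \<Sum>q\<in>I. F x q * G q y)"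
proof (rule eq_matI)
  fix r c assume "r < dim_row (coded_mat n dec (\<lambda>x y. \<Sum>q\<in>I. F x q * G q y))"
    "c < dim_col (coded_mat n dec (\<lambda>x y. \<Sum>q\<in>I. F x q * G q y))"
  then show "(coded_mat n dec F * coded_mat n dec G) $$ (r,c) = coded_mat n dec (\<lambda>x y. \<Sum>q\<in>I. F x q * G q y) $$ (r,c)"
    using sum.reindex_bij_betw[OF assms, of "\<lambda>q. F (dec r) q * G q (dec c)"]
    by (simp add: scalar_prod_def atLeast0LessThan)
qed auto

lemma coded_mat_cong:
  assumes "dec ` {..<n} \<subseteq> I" and "\<And>x y. x \<in> I \<Longrightarrow> y \<in> I \<Longrightarrow> F x y = G x y"
  shows "coded_mat n dec F = coded_mat n dec G"
  using assms by (intro eq_matI) (auto simp: image_subset_iff)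

lemma one_coded_mat: "inj_on dec {..<n} \<Longrightarrow> 1\<^sub>m n = coded_mat n dec (\<lambda>x y. if x = y then 1 else 0)"
  by (rule eq_matI) (auto dest: inj_onD)

definition monomial :: "('i \<Rightarrow> 'i) \<Rightarrow> ('i \<Rightarrow> complex) \<Rightarrow> 'i \<Rightarrow> 'i \<Rightarrow> complex" where
  "monomial \<sigma> w q y = (if q = \<sigma> y then w y else 0)"

text \<open>Placed along an injection, the nonzero entries of a monomial matrix lie in distinct rows, so its
  columns are orthogonal and its singular values are the moduli of the entries.\<close>

lemma trace_norm_coded_monomial:
  assumes dec: "bij_betw dec {..<n} I" and \<sigma>: "inj_on \<sigma> I" "\<sigma> ` I \<subseteq> I"
  shows "trace_norm (coded_mat n dec (monomial \<sigma> w)) = (\<Sum>y\<in>I. cmod (w y))"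
proof -
  let ?N = "coded_mat n dec (monomial \<sigma> w)"
  have fin: "finite I" using dec bij_betw_finite by blast
  have "adj ?N * ?N = coded_mat n dec (\<lambda>x y. if x = y then complex_of_real ((cmod (w x))\<^sup>2) else 0)"
    unfolding adj_coded_mat coded_mat_mult[OF dec] monomial_def
  proof (rule coded_mat_cong)
    show "dec ` {..<n} \<subseteq> I" using dec by (simp add: bij_betw_def)
    fix x y assume "x \<in> I" "y \<in> I"
    have "(\<Sum>q\<in>I. cnj (if q = \<sigma> x then w x else 0) * (if q = \<sigma> y then w y else 0))
        = (\<Sum>q\<in>I. if q = \<sigma> x then (if \<sigma> x = \<sigma> y then cnj (w x) * w y else 0) else 0)"
      by (intro sum.cong) auto
    also have "\<dots> = (if \<sigma> x = \<sigma> y then cnj (w x) * w y else 0)"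
      using fin \<sigma>(2) \<open>x \<in> I\<close> by auto
    also have "\<dots> = (if x = y then complex_of_real ((cmod (w x))\<^sup>2) else 0)"
      using \<sigma>(1) \<open>x \<in> I\<close> \<open>y \<in> I\<close> by (auto simp flip: complex_norm_square simp: mult.commute dest: inj_onD)
    finally show "(\<Sum>q\<in>I. cnj (if q = \<sigma> x then w x else 0) * (if q = \<sigma> y then w y else 0))
        = (if x = y then complex_of_real ((cmod (w x))\<^sup>2) else 0)" .
  qed
  also have "\<dots> = mat n n (\<lambda>(r,s). if r = s then complex_of_real ((cmod (w (dec r)))\<^sup>2) else 0)"
    using dec by (intro eq_matI) (auto simp: bij_betw_def dest: inj_onD)
  finally have "trace_norm ?N = (\<Sum>r<n. cmod (w (dec r)))"
    by (intro trace_norm_diagonal_gram) auto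
  also have "\<dots> = (\<Sum>y\<in>I. cmod (w y))"
    by (rule sum.reindex_bij_betw[OF dec])
  finally show ?thesis .
qed

lemma pair_index_less: "x < m \<Longrightarrow> y < d \<Longrightarrow> x * d + y < m * (d::nat)"
proof -
  assume "x < m" "y < d"
  then have "x * d + y < (x + 1) * d" by simp
  also have "\<dots> \<le> m * d" using \<open>x < m\<close> by (intro mult_right_mono) auto
  finally show ?thesis .
qed

lemma pair_index_div: "y < d \<Longrightarrow> (x * d + y) div d = (x::nat)"
  by simp

lemma sum_lessThan_mult_div_mod: "(\<Sum>r<m * d. f (r div d) (r mod d)) = (\<Sum>a<m. \<Sum>b<(d::nat). f a b)"
proof -
  have "bij_betw (\<lambda>r. (r div d, r mod d)) {..<m * d} ({..<m} \<times> {..<d})"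
  proof (rule bij_betw_byWitness[where f' = "\<lambda>(a,b). a * d + b"])
    show "(\<lambda>r. (r div d, r mod d)) ` {..<m * d} \<subseteq> {..<m} \<times> {..<d}"
      by (auto simp: less_mult_imp_div_less) (metis mod_less_divisor mult_0_right not_gr_zero not_less0)
    show "(\<lambda>(a,b). a * d + b) ` ({..<m} \<times> {..<d}) \<subseteq> {..<m * d}"
      by (auto intro: pair_index_less)
  qed auto
  then show ?thesis
    by (simp add: sum.reindex_bij_betw[symmetric, where h = "\<lambda>r. (r div d, r mod d)"] sum.cartesian_product)
qed

lemma sum_lessThan_diagonal_pairs:
  "(\<Sum>x<d*d. if x div d = x mod d then f x else 0) = (\<Sum>a<(d::nat). f (a * d + a))"
proof -
  have "(\<Sum>x<d*d. if x div d = x mod d then f x else 0)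
      = (\<Sum>x<d*d. (\<lambda>a b. if a = b then f (a * d + b) else 0) (x div d) (x mod d))"
    by (intro sum.cong refl) (simp only: div_mult_mod_eq)
  also have "\<dots> = (\<Sum>a<d. \<Sum>b<d. if a = b then f (a * d + b) else 0)"
    by (rule sum_lessThan_mult_div_mod)
  finally show ?thesis by (simp add: sum.delta)
qed

lemma sum_lessThan_product: "(\<Sum>a<m. \<Sum>b<n. f a * g b) = (\<Sum>a<m. f a) * (\<Sum>b<n. (g b :: 'a :: comm_semiring_0))"
  by (simp add: sum_product)

lemma sum_lessThan_factorise:
  assumes "\<And>a b. a < m \<Longrightarrow> b < n \<Longrightarrow> F a b = c * (f a * g b)"
  shows "(\<Sum>a<m. \<Sum>b<n. F a b) = c * ((\<Sum>a<m. f a) * (\<Sum>b<n. (g b :: 'a :: comm_semiring_0)))"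
proof -
  have "(\<Sum>a<m. \<Sum>b<n. F a b) = (\<Sum>a<m. \<Sum>b<n. c * (f a * g b))"
    using assms by simp
  also have "\<dots> = c * (\<Sum>a<m. \<Sum>b<n. f a * g b)"
    by (simp add: sum_distrib_left)
  also have "\<dots> = c * ((\<Sum>a<m. f a) * (\<Sum>b<n. g b))"
    by (simp only: sum_lessThan_product)
  finally show ?thesis .
qed

lemmas delta_sum_simps =
  if_distrib[of "\<lambda>x. _ * x"] if_distrib[of "\<lambda>x. x * _"] if_distrib[of cnj] sum.delta sum.delta'

text \<open>\<open>dec3\<close> and \<open>dec4\<close> decode the row indices of \<open>VA\<close> and \<open>VAB\<close>: \<open>(a*d + b)*d + k\<close> and
  \<open>(a*d + b)*(d*d) + (k*d + l)\<close>.\<close>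

definition dec3 :: "nat \<Rightarrow> nat \<Rightarrow> nat \<times> nat \<times> nat" where
  "dec3 d r = (r div d div d, r div d mod d, r mod d)"

definition dec4 :: "nat \<Rightarrow> nat \<Rightarrow> nat \<times> nat \<times> nat \<times> nat" where
  "dec4 d r = (r div (d*d) div d, r div (d*d) mod d, r mod (d*d) div d, r mod (d*d) mod d)"

definition cube3 :: "nat \<Rightarrow> (nat \<times> nat \<times> nat) set" where
  "cube3 d = {..<d} \<times> {..<d} \<times> {..<d}"

definition cube4 :: "nat \<Rightarrow> (nat \<times> nat \<times> nat \<times> nat) set" where
  "cube4 d = {..<d} \<times> {..<d} \<times> {..<d} \<times> {..<d}"

lemma bij_betw_dec3: "bij_betw (dec3 d) {..<d*d*d} (cube3 d)"
proof (rule bij_betw_byWitness[where f' = "\<lambda>(a,b,k). (a * d + b) * d + k"])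
  show "dec3 d ` {..<d*d*d} \<subseteq> cube3 d"
  proof (rule image_subsetI)
    fix r assume "r \<in> {..<d*d*d}"
    then have "0 < d" "r div d div d < d"
      by (auto simp: div_mult2_eq[symmetric] less_mult_imp_div_less mult.commute intro: Nat.gr0I)
    then show "dec3 d r \<in> cube3 d" by (simp add: dec3_def cube3_def)
  qed
  show "(\<lambda>(a,b,k). (a * d + b) * d + k) ` cube3 d \<subseteq> {..<d*d*d}"
    by (auto simp: cube3_def intro!: pair_index_less)
qed (auto simp: dec3_def cube3_def)

lemma bij_betw_dec4: "bij_betw (dec4 d) {..<d*d*d*d} (cube4 d)"
proof (rule bij_betw_byWitness[where f' = "\<lambda>(a,b,k,l). (a * d + b) * (d*d) + (k * d + l)"])
  show "dec4 d ` {..<d*d*d*d} \<subseteq> cube4 d"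
  proof (rule image_subsetI)
    fix r assume "r \<in> {..<d*d*d*d}"
    then have "0 < d" "r div (d*d) div d < d"
      by (auto simp: div_mult2_eq[symmetric] less_mult_imp_div_less mult.commute intro: Nat.gr0I)
    moreover have "r mod (d*d) div d < d" if "0 < d"
      using that by (simp add: div_less_iff_less_mult)
    ultimately show "dec4 d r \<in> cube4 d" by (simp add: dec4_def cube4_def)
  qed
  show "(\<lambda>(a,b,k,l). (a * d + b) * (d*d) + (k * d + l)) ` cube4 d \<subseteq> {..<d*d*d*d}"
  proof (rule image_subsetI, clarsimp simp: cube4_def)
    fix a b k l assume "a < d" "b < d" "k < d" "l < d"
    then have "(a * d + b) * (d*d) + (k * d + l) < (d*d) * (d*d)"
      by (intro pair_index_less)
    then show "(a * d + b) * (d*d) + (k * d + l) < d*d*d*d"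
      by (simp add: mult.assoc)
  qed
qed (auto simp: dec4_def cube4_def pair_index_less div_mult_mod_eq)

lemma dec3_less:
  assumes "r < d*d*d" "dec3 d r = (a,b,k)"
  shows "a < d" "b < d" "k < d"
  using bij_betw_apply[OF bij_betw_dec3[of d], of r] assms by (auto simp: cube3_def)

lemma dec4_less:
  assumes "r < d*d*d*d" "dec4 d r = (a,b,k,l)"
  shows "a < d" "b < d" "k < d" "l < d"
  using bij_betw_apply[OF bij_betw_dec4[of d], of r] assms by (auto simp: cube4_def)

lemma dec4_pair_index: "y < d*d \<Longrightarrow> dec4 d (x * (d*d) + y) = (x div d, x mod d, y div d, y mod d)"
  using pair_index_div[of y "d*d" x] by (simp add: dec4_def)

lemma sum_cube3: "(\<Sum>q\<in>cube3 d. f q) = (\<Sum>a<d. \<Sum>b<d. \<Sum>k<d. f (a,b,k))"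
  by (simp add: cube3_def sum.cartesian_product)

lemma sum_cube4: "(\<Sum>q\<in>cube4 d. f q) = (\<Sum>a<d. \<Sum>b<d. \<Sum>k<d. \<Sum>l<d. f (a,b,k,l))"
  by (simp add: cube4_def sum.cartesian_product)

section \<open>Orthonormal bases and the isotropic state\<close>

lemma onb_orthonormal:
  "onb d u \<Longrightarrow> k < d \<Longrightarrow> l < d \<Longrightarrow> (\<Sum>a<d. cnj (u k a) * u l a) = (if k = l then 1 else 0)"
  by (simp add: onb_def)

lemma onb_orthonormal_cnj:
  assumes "onb d u" "k < d" "l < d"
  shows "(\<Sum>a<d. u k a * cnj (u l a)) = (if k = l then 1 else 0)"
proof -
  have "(\<Sum>a<d. u k a * cnj (u l a)) = cnj (\<Sum>a<d. cnj (u k a) * u l a)" by simp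
  then show ?thesis using onb_orthonormal[OF assms] by simp
qed

lemma onb_complete:
  assumes u: "onb d u" and "a < d" "b < d"
  shows "(\<Sum>k<d. cnj (u k a) * u k b) = (if a = b then 1 else 0)"
proof -
  define U where "U = mat d d (\<lambda>(k,a). u k a)"
  have U: "U \<in> carrier_mat d d" "adj U \<in> carrier_mat d d" by (simp_all add: U_def)
  have "U * adj U = 1\<^sub>m d"
    by (rule eq_matI) (auto simp: U_def scalar_prod_def atLeast0LessThan onb_orthonormal_cnj[OF u])
  then have "adj U * U = 1\<^sub>m d" using mat_mult_left_right_inverse[OF U] by simp
  then have "(adj U * U) $$ (a,b) = 1\<^sub>m d $$ (a,b)" by simp
  then show ?thesis using assms by (simp add: U_def scalar_prod_def atLeast0LessThan)
qed

definition std_basis :: "nat \<Rightarrow> nat \<Rightarrow> complex" where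
  "std_basis k a = (if k = a then 1 else 0)"

lemma onb_std_basis: "onb d std_basis"
  by (auto simp: onb_def std_basis_def delta_sum_simps cong: if_cong)

text \<open>With these weights the isotropic state is \<open>iso_noise \<cdot> 1 + iso_coh \<cdot> \<psi>\<psi>\<^sup>\<dagger>\<close>, where
  \<open>\<psi> = \<Sum>\<^sub>i |i\<rangle>|i\<rangle>\<close> is the unnormalised maximally entangled vector.\<close>

definition iso_noise :: "nat \<Rightarrow> real \<Rightarrow> real" where
  "iso_noise d p = (1 - p) / (real d ^ 2 - 1)"

definition iso_coh :: "nat \<Rightarrow> real \<Rightarrow> real" where
  "iso_coh d p = (p - iso_noise d p) / real d"

lemma iso_weights:
  assumes d: "2 \<le> d" and p: "0 \<le> p" "p \<le> 1"
  shows "0 \<le> iso_noise d p" "0 \<le> iso_coh d p + iso_noise d p"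
    "real d * iso_coh d p + (real d)\<^sup>2 * iso_noise d p = 1"
    "\<bar>iso_coh d p\<bar> * ((real d)\<^sup>2 - real d) / 2 = \<bar>p * real d ^ 2 - 1\<bar> / (2 * (real d + 1))"
proof -
  have dr: "real d \<ge> 2" using d by simp
  then have "(real d)\<^sup>2 \<ge> 2\<^sup>2" by (intro power_mono) auto
  then have q: "(real d)\<^sup>2 - 1 > 0" by simp
  have hb: "((real d)\<^sup>2 - 1) * iso_noise d p = 1 - p"
    using q by (simp add: iso_noise_def)
  show t: "0 \<le> iso_noise d p" using p q by (simp add: iso_noise_def)
  have "iso_coh d p + iso_noise d p = p / real d + iso_noise d p * (1 - 1 / real d)"
    by (simp add: iso_coh_def diff_divide_distrib right_diff_distrib)
  moreover have "0 \<le> p / real d + iso_noise d p * (1 - 1 / real d)"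
    using p t dr by (intro add_nonneg_nonneg mult_nonneg_nonneg) auto
  ultimately show "0 \<le> iso_coh d p + iso_noise d p" by simp
  have "real d * iso_coh d p = p - iso_noise d p"
    using dr by (simp add: iso_coh_def)
  then show "real d * iso_coh d p + (real d)\<^sup>2 * iso_noise d p = 1"
    using hb by (simp add: algebra_simps)
  have "(p - iso_noise d p) * ((real d)\<^sup>2 - 1) = p * (real d)\<^sup>2 - 1"
    using hb by (simp add: algebra_simps)
  then have "p - iso_noise d p = (p * (real d)\<^sup>2 - 1) / ((real d)\<^sup>2 - 1)"
    using q by (simp add: eq_divide_eq)
  then have "iso_coh d p = (p * (real d)\<^sup>2 - 1) / (((real d)\<^sup>2 - 1) * real d)"
    by (simp add: iso_coh_def)
  moreover have "(real d)\<^sup>2 - 1 = (real d - 1) * (real d + 1)" "(real d)\<^sup>2 - real d = real d * (real d - 1)"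
    by (simp_all add: algebra_simps power2_eq_square)
  ultimately show "\<bar>iso_coh d p\<bar> * ((real d)\<^sup>2 - real d) / 2 = \<bar>p * real d ^ 2 - 1\<bar> / (2 * (real d + 1))"
    using dr by (simp add: abs_divide abs_mult)
qed

lemma dim_isotropic [simp]: "dim_row (isotropic d p) = d*d" "dim_col (isotropic d p) = d*d"
  by (simp_all add: isotropic_def Phi_def)

lemma isotropic_index:
  assumes "x < d*d" "y < d*d" "0 < d"
  shows "isotropic d p $$ (x,y) =
    complex_of_real (iso_coh d p) * (if x div d = x mod d \<and> y div d = y mod d then 1 else 0)
    + complex_of_real (iso_noise d p) * (if x = y then 1 else 0)"
proof -
  have sq: "complex_of_real (1 / sqrt (real d)) * cnj (complex_of_real (1 / sqrt (real d)))
      = complex_of_real (1 / real d)"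
    using assms by (simp flip: of_real_mult)
  have e: "complex_of_nat d * (complex_of_nat d)\<^sup>2 - complex_of_nat d
      = ((complex_of_nat d)\<^sup>2 - 1) * complex_of_nat d"
    by (simp add: algebra_simps power2_eq_square)
  show ?thesis using assms sq
    by (simp add: isotropic_def Phi_def phi_def iso_coh_def iso_noise_def of_real_diff[symmetric]
        algebra_simps diff_divide_distrib)
      (simp add: e add_divide_distrib divide_divide_eq_left)
qed

lemma isotropic_congruence_index:
  assumes V: "V \<in> carrier_mat N (d*d)" and d: "0 < d" and ij: "i < N" "j < N"
  shows "(V * isotropic d p * adj V) $$ (i,j) =
    complex_of_real (iso_coh d p) * (\<Sum>x<d. V $$ (i, x*d+x)) * cnj (\<Sum>x<d. V $$ (j, x*d+x))
    + complex_of_real (iso_noise d p) * (\<Sum>y<d*d. V $$ (i,y) * cnj (V $$ (j,y)))"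
proof -
  let ?g = "complex_of_real (iso_coh d p)" and ?t = "complex_of_real (iso_noise d p)"
  let ?D = "\<lambda>y::nat. if y div d = y mod d then 1 else (0::complex)"
  have diag: "(\<Sum>x<d*d. f x * ?D x) = (\<Sum>x<d. f (x*d+x))" for f
    using sum_lessThan_diagonal_pairs[of d f] by (simp add: if_distrib[of "\<lambda>z. f _ * z"] cong: if_cong)
  have row: "(V * isotropic d p) $$ (i,y) = ?g * ?D y * (\<Sum>x<d. V $$ (i, x*d+x)) + ?t * V $$ (i,y)"
    if y: "y < d*d" for y
  proof -
    have "(V * isotropic d p) $$ (i,y) = (\<Sum>x<d*d. V $$ (i,x) * isotropic d p $$ (x,y))"
      using V ij y by (simp add: scalar_prod_def atLeast0LessThan)
    also have "\<dots> = (\<Sum>x<d*d. ?g * ?D y * (V $$ (i,x) * ?D x) + (if x = y then ?t * V $$ (i,y) else 0))"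
      using y d by (intro sum.cong) (auto simp: isotropic_index algebra_simps)
    also have "\<dots> = ?g * ?D y * (\<Sum>x<d*d. V $$ (i,x) * ?D x) + ?t * V $$ (i,y)"
      using y by (simp add: sum.distrib sum_distrib_left)
    finally show ?thesis by (simp only: diag)
  qed
  have "(V * isotropic d p * adj V) $$ (i,j) = (\<Sum>y<d*d. (V * isotropic d p) $$ (i,y) * cnj (V $$ (j,y)))"
    using V ij by (simp add: scalar_prod_def atLeast0LessThan)
  also have "\<dots> = ?g * (\<Sum>x<d. V $$ (i, x*d+x)) * (\<Sum>y<d*d. cnj (V $$ (j,y)) * ?D y)
      + ?t * (\<Sum>y<d*d. V $$ (i,y) * cnj (V $$ (j,y)))"
    by (simp add: row sum.distrib sum_distrib_left algebra_simps)
  finally show ?thesis by (simp only: diag cnj_sum[symmetric])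
qed

section \<open>One-sided measurement\<close>

lemma dim_VA: "dim_row (VA d u) = d*d*d" "dim_col (VA d u) = d*d"
  by (simp_all add: VA_def)

lemma VA_carrier: "VA d u \<in> carrier_mat (d*d*d) (d*d)"
  by (rule carrier_matI) (simp_all add: dim_VA)

lemma VA_index:
  "r < d*d*d \<Longrightarrow> y < d*d \<Longrightarrow> dec3 d r = (a,b,k) \<Longrightarrow>
    VA d u $$ (r,y) = u k a * cnj (u k (y div d)) * (if b = y mod d then 1 else 0)"
  by (simp add: VA_def dec3_def Let_def)

lemma measured_isotropic_A:
  assumes u: "onb d u" and d: "0 < d"
  shows "VA d u * isotropic d p * adj (VA d u) = coded_mat (d*d*d) (dec3 d) (\<lambda>(a,b,k) (a',b',k').
     complex_of_real (iso_coh d p) * (u k a * cnj (u k b)) * cnj (u k' a' * cnj (u k' b'))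
     + complex_of_real (iso_noise d p) * (if k = k' \<and> b = b' then u k a * cnj (u k a') else 0))"
    (is "_ = coded_mat _ _ ?F")
proof (rule eq_matI)
  fix i j assume "i < dim_row (coded_mat (d*d*d) (dec3 d) ?F)" "j < dim_col (coded_mat (d*d*d) (dec3 d) ?F)"
  then have i: "i < d*d*d" and j: "j < d*d*d" by auto
  obtain a b k where dec: "dec3 d i = (a,b,k)" by (cases "dec3 d i") auto
  obtain a' b' k' where dec': "dec3 d j = (a',b',k')" by (cases "dec3 d j") auto
  note lt = dec3_less[OF i dec] dec3_less[OF j dec']
  have psi: "(\<Sum>x<d. VA d u $$ (r, x*d+x)) = u k a * cnj (u k b)"
    if "r < d*d*d" "dec3 d r = (a,b,k)" "b < d" for r a b k
    using that pair_index_less[of _ d _ d]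
    by (simp add: VA_index if_distrib[of "\<lambda>x. _ * x"] sum.delta cong: if_cong)
  have "(\<Sum>y<d*d. VA d u $$ (i,y) * cnj (VA d u $$ (j,y)))
      = (\<Sum>x<d. \<Sum>z<d. u k a * cnj (u k x) * (if b = z then 1 else 0)
          * (cnj (u k' a') * u k' x * (if b' = z then 1 else 0)))"
    using sum_lessThan_mult_div_mod[of "\<lambda>x z. u k a * cnj (u k x) * (if b = z then 1 else 0)
          * (cnj (u k' a') * u k' x * (if b' = z then 1 else 0))" d d] i j
    by (simp add: VA_index[OF i _ dec] VA_index[OF j _ dec'] if_distrib[of cnj] cong: if_cong)
  also have "\<dots> = (if b = b' then u k a * cnj (u k' a') * (\<Sum>x<d. cnj (u k x) * u k' x) else 0)"
    using lt by (cases "b = b'")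
      (simp_all add: if_distrib[of "\<lambda>x. _ * x"] sum.delta sum_distrib_left mult_ac cong: if_cong)
  also have "\<dots> = (if k = k' \<and> b = b' then u k a * cnj (u k a') else 0)"
    using onb_orthonormal[OF u lt(3) lt(6)] by auto
  finally show "(VA d u * isotropic d p * adj (VA d u)) $$ (i,j) = coded_mat (d*d*d) (dec3 d) ?F $$ (i,j)"
    using i j dec dec' lt
    by (simp add: isotropic_congruence_index[OF VA_carrier d i j] psi)
qed (simp_all add: dim_VA)

lemma ptrans_coded_dec3:
  assumes d: "0 < d"
  shows "ptrans (d*d) d (coded_mat (d*d*d) (dec3 d) F)
    = coded_mat (d*d*d) (dec3 d) (\<lambda>(a,b,k) (a',b',k'). F (a,b,k') (a',b',k))"
    (is "_ = coded_mat _ _ ?G")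
proof (rule eq_matI)
  fix i j assume "i < dim_row (coded_mat (d*d*d) (dec3 d) ?G)" "j < dim_col (coded_mat (d*d*d) (dec3 d) ?G)"
  then have i: "i < d*d*d" and j: "j < d*d*d" by auto
  have "i div d * d + j mod d < d*d*d" "j div d * d + i mod d < d*d*d"
    using i j d by (auto intro!: pair_index_less simp: less_mult_imp_div_less)
  then show "ptrans (d*d) d (coded_mat (d*d*d) (dec3 d) F) $$ (i,j) = coded_mat (d*d*d) (dec3 d) ?G $$ (i,j)"
    using i j d by (simp add: ptrans_def dec3_def)
qed (auto simp: ptrans_def)

definition WA :: "nat \<Rightarrow> (nat \<Rightarrow> nat \<Rightarrow> complex) \<Rightarrow> complex mat" where
  "WA d u = coded_mat (d*d*d) (dec3 d) (\<lambda>(a,b,k) (i,j,m). u i a * cnj (u j b) * (if m = k then 1 else 0))"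

lemma WA_carrier: "WA d u \<in> carrier_mat (d*d*d) (d*d*d)"
  by (simp add: WA_def)

lemma WA_unitary:
  assumes u: "onb d u"
  shows "adj (WA d u) * WA d u = 1\<^sub>m (d*d*d)"
  unfolding WA_def adj_coded_mat coded_mat_mult[OF bij_betw_dec3]
    one_coded_mat[OF bij_betw_imp_inj_on[OF bij_betw_dec3]]
proof (rule coded_mat_cong[where I = "cube3 d"], goal_cases)
  case 1
  show ?case using bij_betw_dec3 by (simp add: bij_betw_def)
next
  case (2 x y)
  obtain i j m where x: "x = (i,j,m)" "i < d" "j < d" "m < d" using 2 by (auto simp: cube3_def)
  obtain i' j' m' where y: "y = (i',j',m')" "i' < d" "j' < d" "m' < d" using 2 by (auto simp: cube3_def)
  show ?case (is "?L = ?R")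
  proof -
    have "?L = (\<Sum>a<d. \<Sum>b<d. (cnj (u i a) * u i' a) * (u j b * cnj (u j' b)) * (if m = m' then 1 else 0))"
      unfolding x(1) y(1) sum_cube3 prod.case using x y
      by (cases "m = m'") (simp_all add: delta_sum_simps mult_ac cong: if_cong)
    also have "\<dots> = (\<Sum>a<d. cnj (u i a) * u i' a) * (\<Sum>b<d. u j b * cnj (u j' b)) * (if m = m' then 1 else 0)"
      by (cases "m = m'") (simp_all add: sum_lessThan_product)
    also have "\<dots> = ?R"
      unfolding onb_orthonormal[OF u x(2) y(2)] onb_orthonormal_cnj[OF u x(3) y(3)] using x y by auto
    finally show ?thesis .
  qed
qed

text \<open>The next two sums are the entries of \<open>adj (WA d u) * \<sigma>\<^sup>\<Gamma>\<close> and of \<open>adj (WA d u) * \<sigma>\<^sup>\<Gamma> * WA d u\<close>,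
  where \<open>\<sigma>\<^sup>\<Gamma>\<close> is the partial transpose of the measured state, with weights \<open>g\<close> and \<open>t\<close>.\<close>

lemma WA_ptrans_inner_sum:
  assumes u: "onb d u" and lt: "i < d" "j < d" "m < d" "a' < d" "b' < d" "k' < d"
  shows "(\<Sum>a<d. \<Sum>b<d. \<Sum>k<d. cnj (u i a * cnj (u j b) * (if m = k then 1 else 0)) *
      (g * (u k' a * cnj (u k' b)) * cnj (u k a' * cnj (u k b'))
       + t * (if k' = k \<and> b = b' then u k' a * cnj (u k' a') else 0)))
    = g * (if i = k' \<and> j = k' then cnj (u m a') * u m b' else 0)
      + t * (if k' = m \<and> i = m then cnj (u m a') * u j b' else 0)"
proof -
  have "(\<Sum>a<d. \<Sum>b<d. \<Sum>k<d. cnj (u i a * cnj (u j b) * (if m = k then 1 else 0)) *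
      (g * (u k' a * cnj (u k' b)) * cnj (u k a' * cnj (u k b'))
       + t * (if k' = k \<and> b = b' then u k' a * cnj (u k' a') else 0)))
    = (\<Sum>a<d. \<Sum>b<d. cnj (u i a) * u j b * (g * (u k' a * cnj (u k' b) * cnj (u m a') * u m b')
       + t * (if k' = m \<and> b = b' then u k' a * cnj (u k' a') else 0)))"
    using lt by (simp add: delta_sum_simps mult_ac cong: if_cong)
  also have "\<dots> = g * (cnj (u m a') * u m b') * (\<Sum>a<d. \<Sum>b<d. (cnj (u i a) * u k' a) * (u j b * cnj (u k' b)))
      + t * (\<Sum>a<d. \<Sum>b<d. (if k' = m \<and> b = b' then cnj (u i a) * u j b * u k' a * cnj (u k' a') else 0))"
    by (simp add: sum.distrib sum_distrib_left algebra_simps delta_sum_simps cong: if_cong)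
  also have "\<dots> = g * (cnj (u m a') * u m b') * ((\<Sum>a<d. cnj (u i a) * u k' a) * (\<Sum>b<d. u j b * cnj (u k' b)))
      + t * (if k' = m then u j b' * cnj (u k' a') * (\<Sum>a<d. cnj (u i a) * u k' a) else 0)"
    using lt by (cases "k' = m")
      (simp_all add: sum_lessThan_product delta_sum_simps sum_distrib_left mult_ac cong: if_cong)
  also have "\<dots> = g * (if i = k' \<and> j = k' then cnj (u m a') * u m b' else 0)
      + t * (if k' = m \<and> i = m then cnj (u m a') * u j b' else 0)"
    using onb_orthonormal[OF u lt(1) lt(6)] onb_orthonormal_cnj[OF u lt(2) lt(6)] by auto
  finally show ?thesis .
qed

lemma WA_ptrans_outer_sum:
  assumes u: "onb d u" and lt: "i < d" "j < d" "m < d" "i' < d" "j' < d" "m' < d"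
  shows "(\<Sum>a'<d. \<Sum>b'<d. \<Sum>k'<d.
      (g * (if i = k' \<and> j = k' then cnj (u m a') * u m b' else 0)
       + t * (if k' = m \<and> i = m then cnj (u m a') * u j b' else 0))
      * (u i' a' * cnj (u j' b') * (if m' = k' then 1 else 0)))
    = g * (if i = m' \<and> j = m' \<and> i' = m \<and> j' = m then 1 else 0)
      + t * (if m = m' \<and> i = m \<and> i' = m \<and> j = j' then 1 else 0)"
proof -
  define c1 where "c1 \<longleftrightarrow> i = m' \<and> j = m'"
  define c2 where "c2 \<longleftrightarrow> m' = m \<and> i = m"
  have "(\<Sum>a'<d. \<Sum>b'<d. \<Sum>k'<d.
      (g * (if i = k' \<and> j = k' then cnj (u m a') * u m b' else 0)
       + t * (if k' = m \<and> i = m then cnj (u m a') * u j b' else 0))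
      * (u i' a' * cnj (u j' b') * (if m' = k' then 1 else 0)))
    = (\<Sum>a'<d. \<Sum>b'<d. (g * (if c1 then cnj (u m a') * u m b' else 0)
       + t * (if c2 then cnj (u m a') * u j b' else 0)) * (u i' a' * cnj (u j' b')))"
    using lt unfolding c1_def c2_def by (simp add: delta_sum_simps cong: if_cong)
  also have "\<dots> = g * (if c1 then (\<Sum>a'<d. \<Sum>b'<d. (cnj (u m a') * u i' a') * (u m b' * cnj (u j' b'))) else 0)
     + t * (if c2 then (\<Sum>a'<d. \<Sum>b'<d. (cnj (u m a') * u i' a') * (u j b' * cnj (u j' b'))) else 0)"
    by (cases c1; cases c2)
      (simp_all add: sum_distrib_left sum.distrib distrib_left distrib_right mult_ac)
  also have "\<dots> = g * (if c1 then (if m = i' then 1 else 0) * (if m = j' then 1 else 0) else 0)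
      + t * (if c2 then (if m = i' then 1 else 0) * (if j = j' then 1 else 0) else 0)"
    unfolding sum_lessThan_product onb_orthonormal[OF u lt(3) lt(4)]
      onb_orthonormal_cnj[OF u lt(3) lt(5)] onb_orthonormal_cnj[OF u lt(2) lt(5)] ..
  also have "\<dots> = g * (if i = m' \<and> j = m' \<and> i' = m \<and> j' = m then 1 else 0)
      + t * (if m = m' \<and> i = m \<and> i' = m \<and> j = j' then 1 else 0)"
  proof -
    have "(if c1 then (if m = i' then 1 else 0) * (if m = j' then 1 else 0) else 0)
        = (if i = m' \<and> j = m' \<and> i' = m \<and> j' = m then 1 else (0::complex))"
      unfolding c1_def by auto
    moreover have "(if c2 then (if m = i' then 1 else 0) * (if j = j' then 1 else 0) else 0)
        = (if m = m' \<and> i = m \<and> i' = m \<and> j = j' then 1 else (0::complex))"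
      unfolding c2_def by auto
    ultimately show ?thesis by (simp only:)
  qed
  finally show ?thesis .
qed

lemma weighted_indicator_split:
  "complex_of_real g * (if C \<and> F then 1 else 0) + complex_of_real t * (if F \<and> E then 1 else 0)
   = (if F then complex_of_real (g * (if C then 1 else 0) + t * (if E then 1 else 0)) else 0)"
  by (cases F; cases C; cases E) simp_all

lemma monomial_A_entry:
  "complex_of_real g * (if i = m' \<and> j = m' \<and> i' = m \<and> j' = m then 1 else 0)
     + complex_of_real t * (if m = m' \<and> i = m \<and> i' = m \<and> j = j' then 1 else 0)
   = monomial (\<lambda>(i,j,m). if i = j then (m,m,i) else (i::nat,j,m))
       (\<lambda>(i,j,m). complex_of_real (g * (if i = j then 1 else 0) + t * (if i = m then 1 else 0)))
       (i,j,m) (i',j',m')"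
proof -
  let ?F = "(i,j,m) = (if i' = j' then (m',m',i') else (i',j',m'))"
  have "(i = m' \<and> j = m' \<and> i' = m \<and> j' = m) \<longleftrightarrow> i' = j' \<and> ?F"
    by (cases "i' = j'") auto
  moreover have "(m = m' \<and> i = m \<and> i' = m \<and> j = j') \<longleftrightarrow> ?F \<and> i' = m'"
    by (cases "i' = j'") auto
  ultimately show ?thesis
    unfolding monomial_def prod.case by (simp only: weighted_indicator_split)
qed

lemma WA_monomialises:
  assumes u: "onb d u" and d: "0 < d"
  shows "adj (WA d u) * ptrans (d*d) d (VA d u * isotropic d p * adj (VA d u)) * WA d u
    = coded_mat (d*d*d) (dec3 d) (monomial (\<lambda>(i,j,m). if i = j then (m,m,i) else (i,j,m))
        (\<lambda>(i,j,m). complex_of_real (iso_coh d p * (if i = j then 1 else 0) + iso_noise d p * (if i = m then 1 else 0))))"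
  unfolding measured_isotropic_A[OF u d] ptrans_coded_dec3[OF d] WA_def adj_coded_mat
    coded_mat_mult[OF bij_betw_dec3]
proof (rule coded_mat_cong[where I = "cube3 d"], goal_cases)
  case 1
  show ?case using bij_betw_dec3 by (simp add: bij_betw_def)
next
  case (2 x y)
  obtain i j m where x: "x = (i,j,m)" "i < d" "j < d" "m < d" using 2 by (auto simp: cube3_def)
  obtain i' j' m' where y: "y = (i',j',m')" "i' < d" "j' < d" "m' < d" using 2 by (auto simp: cube3_def)
  let ?g = "complex_of_real (iso_coh d p)" and ?t = "complex_of_real (iso_noise d p)"
  show ?case (is "?L = ?R")
  proof -
    have "?L = (\<Sum>a'<d. \<Sum>b'<d. \<Sum>k'<d.
        (?g * (if i = k' \<and> j = k' then cnj (u m a') * u m b' else 0)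
         + ?t * (if k' = m \<and> i = m then cnj (u m a') * u j b' else 0))
        * (u i' a' * cnj (u j' b') * (if m' = k' then 1 else 0)))"
      unfolding x y sum_cube3 prod.case
      by (intro sum.cong refl arg_cong2[where f = "(*)"] WA_ptrans_inner_sum[OF u]) (use x in auto)
    also have "\<dots> = ?g * (if i = m' \<and> j = m' \<and> i' = m \<and> j' = m then 1 else 0)
        + ?t * (if m = m' \<and> i = m \<and> i' = m \<and> j = j' then 1 else 0)"
      by (rule WA_ptrans_outer_sum[OF u]) (use x y in auto)
    also have "\<dots> = ?R"
      unfolding x(1) y(1) by (rule monomial_A_entry)
    finally show ?thesis .
  qed
qed

lemma sum_lessThan_apply_delta:
  "(i::nat) < d \<Longrightarrow> (\<Sum>m<d. f (if i = m then 1 else 0)) = f 1 + (real d - 1) * f (0::real)"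
proof -
  assume i: "i < d"
  have "(\<Sum>m<d. f (if i = m then 1 else 0)) = (\<Sum>m<d. f 0 + (if m = i then f 1 - f 0 else 0))"
    by (intro sum.cong) auto
  also have "\<dots> = real d * f 0 + (f 1 - f 0)" using i by (simp add: sum.distrib)
  finally show ?thesis by (simp add: algebra_simps)
qed

lemma sum_abs_two_deltas:
  "(\<Sum>a<d. \<Sum>b<d. \<Sum>k<d. \<bar>g * (if a = b then 1 else 0) + t * (if a = k then 1 else 0)\<bar>)
   = real d * (\<bar>g + t\<bar> + (real d - 1) * \<bar>t\<bar> + (real d - 1) * \<bar>g\<bar>)"
proof -
  have "(\<Sum>a<d. \<Sum>b<d. \<Sum>k<d. \<bar>g * (if a = b then 1 else 0) + t * (if a = k then 1 else 0)\<bar>)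
     = (\<Sum>a<d. \<Sum>b<d. \<bar>g * (if a = b then 1 else 0) + t\<bar> + (real d - 1) * \<bar>g * (if a = b then 1 else 0)\<bar>)"
  proof (intro sum.cong refl)
    fix a b assume "a \<in> {..<d}"
    then show "(\<Sum>k<d. \<bar>g * (if a = b then 1 else 0) + t * (if a = k then 1 else 0)\<bar>)
        = \<bar>g * (if a = b then 1 else 0) + t\<bar> + (real d - 1) * \<bar>g * (if a = b then 1 else 0)\<bar>"
      using sum_lessThan_apply_delta[of a d "\<lambda>s. \<bar>g * (if a = b then 1 else 0) + t * s\<bar>"] by simp
  qed
  also have "\<dots> = (\<Sum>a<d. \<bar>g + t\<bar> + (real d - 1) * \<bar>g\<bar> + (real d - 1) * \<bar>t\<bar>)"
  proof (intro sum.cong refl)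
    fix a assume "a \<in> {..<d}"
    then show "(\<Sum>b<d. \<bar>g * (if a = b then 1 else 0) + t\<bar> + (real d - 1) * \<bar>g * (if a = b then 1 else 0)\<bar>)
        = \<bar>g + t\<bar> + (real d - 1) * \<bar>g\<bar> + (real d - 1) * \<bar>t\<bar>"
      using sum_lessThan_apply_delta[of a d "\<lambda>s. \<bar>g * s + t\<bar> + (real d - 1) * \<bar>g * s\<bar>"]
      by (simp add: algebra_simps)
  qed
  also have "\<dots> = real d * (\<bar>g + t\<bar> + (real d - 1) * \<bar>t\<bar> + (real d - 1) * \<bar>g\<bar>)"
    by (simp add: algebra_simps)
  finally show ?thesis .
qed

lemma negativity_VA:
  assumes u: "onb d u" and d: "2 \<le> d" and p: "0 \<le> p" "p \<le> 1"
  shows "negativity (d*d) d (VA d u * isotropic d p * adj (VA d u))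
    = \<bar>iso_coh d p\<bar> * ((real d)\<^sup>2 - real d) / 2"
proof -
  let ?M = "ptrans (d*d) d (VA d u * isotropic d p * adj (VA d u))"
  let ?g = "iso_coh d p" and ?t = "iso_noise d p"
  have d0: "0 < d" using d by simp
  have "trace_norm ?M = trace_norm (adj (WA d u) * ?M * WA d u)"
    by (rule trace_norm_unitary_conj[symmetric, OF ptrans_carrier WA_carrier WA_unitary[OF u]])
  also have "\<dots> = (\<Sum>y\<in>cube3 d. cmod ((\<lambda>(i,j,m). complex_of_real
      (?g * (if i = j then 1 else 0) + ?t * (if i = m then 1 else 0))) y))"
    unfolding WA_monomialises[OF u d0]
    by (rule trace_norm_coded_monomial[OF bij_betw_dec3])
      (auto simp: inj_on_def cube3_def split: if_splits)
  also have "\<dots> = (\<Sum>i<d. \<Sum>j<d. \<Sum>m<d. \<bar>?g * (if i = j then 1 else 0) + ?t * (if i = m then 1 else 0)\<bar>)"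
    by (simp only: sum_cube3 prod.case norm_of_real)
  also have "\<dots> = real d * (\<bar>?g + ?t\<bar> + (real d - 1) * \<bar>?t\<bar> + (real d - 1) * \<bar>?g\<bar>)"
    by (rule sum_abs_two_deltas)
  also have "\<dots> = 1 + ((real d)\<^sup>2 - real d) * \<bar>?g\<bar>"
    using iso_weights[OF d p] by (simp add: algebra_simps power2_eq_square)
  finally show ?thesis
    by (simp add: negativity_def)
qed

section \<open>Two-sided measurement\<close>

lemma dim_VAB: "dim_row (VAB d u v) = d*d*d*d" "dim_col (VAB d u v) = d*d"
  by (simp_all add: VAB_def)

lemma VAB_carrier: "VAB d u v \<in> carrier_mat (d*d*d*d) (d*d)"
  by (rule carrier_matI) (simp_all add: dim_VAB)

lemma VAB_index:
  "r < d*d*d*d \<Longrightarrow> y < d*d \<Longrightarrow> dec4 d r = (a,b,k,l) \<Longrightarrow>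
    VAB d u v $$ (r,y) = u k a * cnj (u k (y div d)) * v l b * cnj (v l (y mod d))"
  by (simp add: VAB_def dec4_def Let_def)

text \<open>\<open>overlap d u v k l\<close> is the inner product of \<open>|u\<^sub>k\<rangle> |v\<^sub>l\<rangle>\<close> with the unnormalised maximally
  entangled vector \<open>\<Sum>\<^sub>x |x\<rangle>|x\<rangle>\<close>.\<close>

definition overlap :: "nat \<Rightarrow> (nat \<Rightarrow> nat \<Rightarrow> complex) \<Rightarrow> (nat \<Rightarrow> nat \<Rightarrow> complex) \<Rightarrow> nat \<Rightarrow> nat \<Rightarrow> complex" where
  "overlap d u v k l = (\<Sum>x<d. cnj (u k x) * cnj (v l x))"

lemma measured_isotropic_AB:
  assumes u: "onb d u" and v: "onb d v" and d: "0 < d"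
  shows "VAB d u v * isotropic d p * adj (VAB d u v) = coded_mat (d*d*d*d) (dec4 d) (\<lambda>(a,b,k,l) (a',b',k',l').
     complex_of_real (iso_coh d p) * (u k a * v l b * overlap d u v k l) * cnj (u k' a' * v l' b' * overlap d u v k' l')
     + complex_of_real (iso_noise d p) * (if k = k' \<and> l = l' then u k a * v l b * cnj (u k a') * cnj (v l b') else 0))"
    (is "_ = coded_mat _ _ ?F")
proof (rule eq_matI)
  fix i j assume "i < dim_row (coded_mat (d*d*d*d) (dec4 d) ?F)" "j < dim_col (coded_mat (d*d*d*d) (dec4 d) ?F)"
  then have i: "i < d*d*d*d" and j: "j < d*d*d*d" by auto
  obtain a b k l where dec: "dec4 d i = (a,b,k,l)" by (cases "dec4 d i") auto
  obtain a' b' k' l' where dec': "dec4 d j = (a',b',k',l')" by (cases "dec4 d j") auto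
  note lt = dec4_less[OF i dec] dec4_less[OF j dec']
  have psi: "(\<Sum>x<d. VAB d u v $$ (r, x*d+x)) = u k a * v l b * overlap d u v k l"
    if "r < d*d*d*d" "dec4 d r = (a,b,k,l)" for r a b k l
    using that pair_index_less[of _ d _ d]
    by (simp add: VAB_index overlap_def sum_distrib_left mult_ac)
  have "(\<Sum>y<d*d. VAB d u v $$ (i,y) * cnj (VAB d u v $$ (j,y)))
      = (\<Sum>x<d. \<Sum>z<d. u k a * cnj (u k x) * v l b * cnj (v l z)
          * cnj (u k' a' * cnj (u k' x) * v l' b' * cnj (v l' z)))"
    using sum_lessThan_mult_div_mod[of "\<lambda>x z. u k a * cnj (u k x) * v l b * cnj (v l z)
          * cnj (u k' a' * cnj (u k' x) * v l' b' * cnj (v l' z))" d d]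
    by (simp add: VAB_index[OF i _ dec] VAB_index[OF j _ dec'])
  also have "\<dots> = (u k a * v l b * cnj (u k' a') * cnj (v l' b'))
      * ((\<Sum>x<d. cnj (u k x) * u k' x) * (\<Sum>z<d. cnj (v l z) * v l' z))"
    by (rule sum_lessThan_factorise) (simp add: mult_ac)
  also have "\<dots> = (if k = k' \<and> l = l' then u k a * v l b * cnj (u k a') * cnj (v l b') else 0)"
    using onb_orthonormal[OF u lt(3) lt(7)] onb_orthonormal[OF v lt(4) lt(8)] by auto
  finally show "(VAB d u v * isotropic d p * adj (VAB d u v)) $$ (i,j) = coded_mat (d*d*d*d) (dec4 d) ?F $$ (i,j)"
    using i j dec dec'
    by (simp add: isotropic_congruence_index[OF VAB_carrier d i j] psi)
qed (simp_all add: dim_VAB)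

lemma ptrans_coded_dec4:
  assumes d: "0 < d"
  shows "ptrans (d*d) (d*d) (coded_mat (d*d*d*d) (dec4 d) F)
    = coded_mat (d*d*d*d) (dec4 d) (\<lambda>(a,b,k,l) (a',b',k',l'). F (a,b,k',l') (a',b',k,l))"
    (is "_ = coded_mat _ _ ?G")
proof (rule eq_matI)
  fix i j assume "i < dim_row (coded_mat (d*d*d*d) (dec4 d) ?G)" "j < dim_col (coded_mat (d*d*d*d) (dec4 d) ?G)"
  then have i: "i < d*d*d*d" "i < (d*d)*(d*d)" and j: "j < d*d*d*d" "j < (d*d)*(d*d)"
    by (simp_all add: mult.assoc)
  have dd: "0 < d*d" using d by simp
  have "i div (d*d) * (d*d) + j mod (d*d) < (d*d)*(d*d)" "j div (d*d) * (d*d) + i mod (d*d) < (d*d)*(d*d)"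
    using i j dd by (auto intro!: pair_index_less simp: less_mult_imp_div_less)
  then have "i div (d*d) * (d*d) + j mod (d*d) < d*d*d*d" "j div (d*d) * (d*d) + i mod (d*d) < d*d*d*d"
    by (simp_all add: mult.assoc)
  moreover have "i mod (d*d) < d*d" "j mod (d*d) < d*d" using dd by simp_all
  ultimately show "ptrans (d*d) (d*d) (coded_mat (d*d*d*d) (dec4 d) F) $$ (i,j)
      = coded_mat (d*d*d*d) (dec4 d) ?G $$ (i,j)"
    using i j by (simp add: ptrans_def dec4_pair_index dec4_def[of d i] dec4_def[of d j])
qed (auto simp: ptrans_def mult.assoc)

definition WAB :: "nat \<Rightarrow> (nat \<Rightarrow> nat \<Rightarrow> complex) \<Rightarrow> (nat \<Rightarrow> nat \<Rightarrow> complex) \<Rightarrow> complex mat" where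
  "WAB d u v = coded_mat (d*d*d*d) (dec4 d)
     (\<lambda>(a,b,k,l) (i,j,m,n). u i a * v j b * ((if m = k then 1 else 0) * (if n = l then 1 else 0)))"

lemma WAB_carrier: "WAB d u v \<in> carrier_mat (d*d*d*d) (d*d*d*d)"
  by (simp add: WAB_def)

lemma WAB_unitary:
  assumes u: "onb d u" and v: "onb d v"
  shows "adj (WAB d u v) * WAB d u v = 1\<^sub>m (d*d*d*d)"
  unfolding WAB_def adj_coded_mat coded_mat_mult[OF bij_betw_dec4]
    one_coded_mat[OF bij_betw_imp_inj_on[OF bij_betw_dec4]]
proof (rule coded_mat_cong[where I = "cube4 d"], goal_cases)
  case 1
  show ?case using bij_betw_dec4 by (simp add: bij_betw_def)
next
  case (2 x y)
  obtain i j m n where x: "x = (i,j,m,n)" "i < d" "j < d" "m < d" "n < d" using 2 by (auto simp: cube4_def)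
  obtain i' j' m' n' where y: "y = (i',j',m',n')" "i' < d" "j' < d" "m' < d" "n' < d" using 2 by (auto simp: cube4_def)
  show ?case (is "?L = ?R")
  proof -
    have "?L = (\<Sum>a<d. \<Sum>b<d. cnj (u i a * v j b) * (u i' a * v j' b)
        * ((if m = m' then 1 else 0) * (if n = n' then 1 else 0)))"
      unfolding x(1) y(1) sum_cube4 prod.case using x y by (simp add: delta_sum_simps cong: if_cong)
    also have "\<dots> = ((if m = m' then 1 else 0) * (if n = n' then 1 else 0))
        * ((\<Sum>a<d. cnj (u i a) * u i' a) * (\<Sum>b<d. cnj (v j b) * v j' b))"
      by (rule sum_lessThan_factorise) (simp add: mult_ac)
    also have "\<dots> = ?R"
      unfolding onb_orthonormal[OF u x(2) y(2)] onb_orthonormal[OF v x(3) y(3)] using x y by auto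
    finally show ?thesis .
  qed
qed

lemma WAB_ptrans_inner_sum:
  assumes u: "onb d u" and v: "onb d v"
    and lt: "i < d" "j < d" "m < d" "n < d" "a' < d" "b' < d" "k' < d" "l' < d"
  shows "(\<Sum>a<d. \<Sum>b<d. \<Sum>k<d. \<Sum>l<d.
      cnj (u i a * v j b * ((if m = k then 1 else 0) * (if n = l then 1 else 0))) *
      (g * (u k' a * v l' b * H k' l') * cnj (u k a' * v l b' * H k l)
       + t * (if k' = k \<and> l' = l then u k' a * v l' b * cnj (u k' a') * cnj (v l' b') else 0)))
    = g * (if i = k' \<and> j = l' then H k' l' * cnj (u m a' * v n b' * H m n) else 0)
      + t * (if k' = m \<and> l' = n \<and> i = m \<and> j = n then cnj (u m a') * cnj (v n b') else 0)"
proof -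
  define c where "c \<longleftrightarrow> k' = m \<and> l' = n"
  let ?C = "g * (H k' l' * cnj (u m a' * v n b' * H m n)) + t * (if c then cnj (u k' a') * cnj (v l' b') else 0)"
  have "(\<Sum>a<d. \<Sum>b<d. \<Sum>k<d. \<Sum>l<d.
      cnj (u i a * v j b * ((if m = k then 1 else 0) * (if n = l then 1 else 0))) *
      (g * (u k' a * v l' b * H k' l') * cnj (u k a' * v l b' * H k l)
       + t * (if k' = k \<and> l' = l then u k' a * v l' b * cnj (u k' a') * cnj (v l' b') else 0)))
    = (\<Sum>a<d. \<Sum>b<d. cnj (u i a * v j b) * (g * (u k' a * v l' b * H k' l') * cnj (u m a' * v n b' * H m n)
       + t * (if c then u k' a * v l' b * cnj (u k' a') * cnj (v l' b') else 0)))"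
    using lt unfolding c_def by (simp add: delta_sum_simps cong: if_cong)
  also have "\<dots> = ?C * ((\<Sum>a<d. cnj (u i a) * u k' a) * (\<Sum>b<d. cnj (v j b) * v l' b))"
    by (rule sum_lessThan_factorise) (cases c; simp add: algebra_simps)
  also have "\<dots> = g * (if i = k' \<and> j = l' then H k' l' * cnj (u m a' * v n b' * H m n) else 0)
      + t * (if k' = m \<and> l' = n \<and> i = m \<and> j = n then cnj (u m a') * cnj (v n b') else 0)"
    unfolding onb_orthonormal[OF u lt(1) lt(7)] onb_orthonormal[OF v lt(2) lt(8)] c_def
    by (cases "k' = m \<and> l' = n"; cases "i = k'"; cases "j = l'") auto
  finally show ?thesis .
qed

lemma weighted_indicators_mult:
  "(C1 \<Longrightarrow> X = Y) \<Longrightarrow>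
    (g * (if C1 then X else 0) + t * (if C2 then 1 else 0)) * ((if E1 then 1 else 0) * (if E2 then 1 else 0))
    = g * (if C1 \<and> E1 \<and> E2 then Y else (0::complex)) + t * (if C2 \<and> E1 \<and> E2 then 1 else 0)"
  by (cases C1; cases C2; cases E1; cases E2) simp_all

lemma WAB_ptrans_outer_sum:
  assumes u: "onb d u" and v: "onb d v"
    and lt: "i < d" "j < d" "m < d" "n < d" "i' < d" "j' < d" "m' < d" "n' < d"
  shows "(\<Sum>a'<d. \<Sum>b'<d. \<Sum>k'<d. \<Sum>l'<d.
      (g * (if i = k' \<and> j = l' then H k' l' * cnj (u m a' * v n b' * H m n) else 0)
       + t * (if k' = m \<and> l' = n \<and> i = m \<and> j = n then cnj (u m a') * cnj (v n b') else 0))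
      * (u i' a' * v j' b' * ((if m' = k' then 1 else 0) * (if n' = l' then 1 else 0))))
    = g * (if i = m' \<and> j = n' \<and> i' = m \<and> j' = n then H i j * cnj (H m n) else 0)
      + t * (if m = m' \<and> n = n' \<and> i = m \<and> j = n \<and> i' = m \<and> j' = n then 1 else 0)"
proof -
  define c1 where "c1 \<longleftrightarrow> i = m' \<and> j = n'"
  define c2 where "c2 \<longleftrightarrow> m' = m \<and> n' = n \<and> i = m \<and> j = n"
  let ?C = "g * (if c1 then H m' n' * cnj (H m n) else 0) + t * (if c2 then 1 else 0)"
  have "(\<Sum>a'<d. \<Sum>b'<d. \<Sum>k'<d. \<Sum>l'<d.
      (g * (if i = k' \<and> j = l' then H k' l' * cnj (u m a' * v n b' * H m n) else 0)
       + t * (if k' = m \<and> l' = n \<and> i = m \<and> j = n then cnj (u m a') * cnj (v n b') else 0))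
      * (u i' a' * v j' b' * ((if m' = k' then 1 else 0) * (if n' = l' then 1 else 0))))
    = (\<Sum>a'<d. \<Sum>b'<d. (g * (if c1 then H m' n' * cnj (u m a' * v n b' * H m n) else 0)
       + t * (if c2 then cnj (u m a') * cnj (v n b') else 0)) * (u i' a' * v j' b'))"
    using lt unfolding c1_def c2_def by (simp add: delta_sum_simps cong: if_cong)
  also have "\<dots> = ?C * ((\<Sum>a'<d. cnj (u m a') * u i' a') * (\<Sum>b'<d. cnj (v n b') * v j' b'))"
    by (rule sum_lessThan_factorise) (cases c1; cases c2; simp add: algebra_simps)
  also have "\<dots> = g * (if i = m' \<and> j = n' \<and> i' = m \<and> j' = n then H i j * cnj (H m n) else 0)
      + t * (if m = m' \<and> n = n' \<and> i = m \<and> j = n \<and> i' = m \<and> j' = n then 1 else 0)"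
  proof -
    have "(i = m' \<and> j = n' \<and> i' = m \<and> j' = n) = (c1 \<and> m = i' \<and> n = j')"
      "(m = m' \<and> n = n' \<and> i = m \<and> j = n \<and> i' = m \<and> j' = n) = (c2 \<and> m = i' \<and> n = j')"
      unfolding c1_def c2_def by auto
    moreover have "c1 \<Longrightarrow> H m' n' * cnj (H m n) = H i j * cnj (H m n)"
      unfolding c1_def by auto
    ultimately show ?thesis
      unfolding onb_orthonormal[OF u lt(3) lt(5)] onb_orthonormal[OF v lt(4) lt(6)]
      by (simp only: weighted_indicators_mult)
  qed
  finally show ?thesis .
qed

lemma monomial_AB_entry:
  "g * (if i = m' \<and> j = n' \<and> i' = m \<and> j' = n then H i j * cnj (H m n) else 0)
     + t * (if m = m' \<and> n = n' \<and> i = m \<and> j = n \<and> i' = m \<and> j' = n then 1 else 0)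
   = monomial (\<lambda>(i,j,m,n). (m::nat,n::nat,i,j))
       (\<lambda>(i,j,m,n). g * (H m n * cnj (H i j)) + t * (if i = m \<and> j = n then 1 else 0))
       (i,j,m,n) (i',j',m',n')"
proof -
  let ?F = "(i,j,m,n) = (m',n',i',j')"
  have "(i = m' \<and> j = n' \<and> i' = m \<and> j' = n) \<longleftrightarrow> ?F"
    "(m = m' \<and> n = n' \<and> i = m \<and> j = n \<and> i' = m \<and> j' = n) \<longleftrightarrow> ?F \<and> (i' = m' \<and> j' = n')"
    by auto
  moreover have "?F \<Longrightarrow> H i j * cnj (H m n) = H m' n' * cnj (H i' j')"
    by auto
  moreover have "(C \<Longrightarrow> X = Y) \<Longrightarrow>
      g * (if C then X else 0) + t * (if C \<and> E then 1 else 0) = (if C then g * Y + t * (if E then 1 else 0) else 0)"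
    for C E X Y
    by (cases C; cases E) simp_all
  ultimately show ?thesis
    unfolding monomial_def prod.case by (simp only:)
qed

lemma WAB_monomialises:
  assumes u: "onb d u" and v: "onb d v" and d: "0 < d"
  shows "adj (WAB d u v) * ptrans (d*d) (d*d) (VAB d u v * isotropic d p * adj (VAB d u v)) * WAB d u v
    = coded_mat (d*d*d*d) (dec4 d) (monomial (\<lambda>(i,j,m,n). (m,n,i,j))
        (\<lambda>(i,j,m,n). complex_of_real (iso_coh d p) * (overlap d u v m n * cnj (overlap d u v i j))
           + complex_of_real (iso_noise d p) * (if i = m \<and> j = n then 1 else 0)))"
  unfolding measured_isotropic_AB[OF u v d] ptrans_coded_dec4[OF d] WAB_def adj_coded_mat
    coded_mat_mult[OF bij_betw_dec4]
proof (rule coded_mat_cong[where I = "cube4 d"], goal_cases)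
  case 1
  show ?case using bij_betw_dec4 by (simp add: bij_betw_def)
next
  case (2 x y)
  obtain i j m n where x: "x = (i,j,m,n)" "i < d" "j < d" "m < d" "n < d" using 2 by (auto simp: cube4_def)
  obtain i' j' m' n' where y: "y = (i',j',m',n')" "i' < d" "j' < d" "m' < d" "n' < d" using 2 by (auto simp: cube4_def)
  let ?g = "complex_of_real (iso_coh d p)" and ?t = "complex_of_real (iso_noise d p)"
  let ?H = "overlap d u v"
  show ?case (is "?L = ?R")
  proof -
    have "?L = (\<Sum>a'<d. \<Sum>b'<d. \<Sum>k'<d. \<Sum>l'<d.
        (?g * (if i = k' \<and> j = l' then ?H k' l' * cnj (u m a' * v n b' * ?H m n) else 0)
         + ?t * (if k' = m \<and> l' = n \<and> i = m \<and> j = n then cnj (u m a') * cnj (v n b') else 0))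
        * (u i' a' * v j' b' * ((if m' = k' then 1 else 0) * (if n' = l' then 1 else 0))))"
      unfolding x(1) y(1) sum_cube4 prod.case
      by (intro sum.cong refl arg_cong2[where f = "(*)"] WAB_ptrans_inner_sum[OF u v]) (use x in auto)
    also have "\<dots> = ?g * (if i = m' \<and> j = n' \<and> i' = m \<and> j' = n then ?H i j * cnj (?H m n) else 0)
        + ?t * (if m = m' \<and> n = n' \<and> i = m \<and> j = n \<and> i' = m \<and> j' = n then 1 else 0)"
      by (rule WAB_ptrans_outer_sum[OF u v x(2-5) y(2-5)])
    also have "\<dots> = ?R"
      unfolding x(1) y(1) by (rule monomial_AB_entry)
    finally show ?thesis .
  qed
qed

lemma abs_le_one_of_sum_squares:
  fixes a :: "nat \<Rightarrow> real"
  assumes "(\<Sum>j<d. (a j)\<^sup>2) = 1" "j < d"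
  shows "\<bar>a j\<bar> \<le> 1"
proof -
  have "(a j)\<^sup>2 \<le> (\<Sum>j<d. (a j)\<^sup>2)"
    by (rule member_le_sum[where f = "\<lambda>j. (a j)\<^sup>2"]) (use assms(2) in auto)
  then show ?thesis using assms(1) by (simp add: abs_square_le_1)
qed

lemma overlap_row_norm:
  assumes u: "onb d u" and v: "onb d v" and i: "i < d"
  shows "(\<Sum>j<d. (cmod (overlap d u v i j))\<^sup>2) = 1"
proof -
  have square: "overlap d u v i j * cnj (overlap d u v i j)
      = (\<Sum>x<d. \<Sum>y<d. (cnj (u i x) * u i y) * (cnj (v j x) * v j y))" for j
  proof -
    have "(\<Sum>x<d. \<Sum>y<d. (cnj (u i x) * u i y) * (cnj (v j x) * v j y))
        = 1 * ((\<Sum>x<d. cnj (u i x) * cnj (v j x)) * (\<Sum>y<d. u i y * v j y))"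
      by (rule sum_lessThan_factorise) (simp add: mult_ac)
    then show ?thesis by (simp add: overlap_def)
  qed
  have "(\<Sum>j<d. overlap d u v i j * cnj (overlap d u v i j))
      = (\<Sum>x<d. \<Sum>y<d. \<Sum>j<d. (cnj (u i x) * u i y) * (cnj (v j x) * v j y))"
    unfolding square by (subst sum.swap) (subst (2) sum.swap, rule refl)
  also have "\<dots> = (\<Sum>x<d. \<Sum>y<d. (cnj (u i x) * u i y) * (if x = y then 1 else 0))"
    by (intro sum.cong refl) (simp add: sum_distrib_left[symmetric] onb_complete[OF v])
  also have "\<dots> = 1"
    using onb_orthonormal[OF u i i] by (simp add: delta_sum_simps cong: if_cong)
  finally have "complex_of_real (\<Sum>j<d. (cmod (overlap d u v i j))\<^sup>2) = 1"
    by (simp only: of_real_sum complex_norm_square)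
  then show ?thesis by (metis of_real_1 of_real_eq_iff)
qed

lemma overlap_sum_ge:
  assumes u: "onb d u" and v: "onb d v"
  shows "real d \<le> (\<Sum>i<d. \<Sum>j<d. cmod (overlap d u v i j))"
proof -
  have "real d = (\<Sum>i<d. \<Sum>j<d. (cmod (overlap d u v i j))\<^sup>2)"
    using overlap_row_norm[OF u v] by simp
  also have "\<dots> \<le> (\<Sum>i<d. \<Sum>j<d. cmod (overlap d u v i j))"
  proof (intro sum_mono)
    fix i j assume "i \<in> {..<d}" "j \<in> {..<d}"
    then have "cmod (overlap d u v i j) \<le> 1"
      using abs_le_one_of_sum_squares[OF overlap_row_norm[OF u v], of i j] by simp
    then show "(cmod (overlap d u v i j))\<^sup>2 \<le> cmod (overlap d u v i j)"
      by (simp add: power2_eq_square mult_left_le)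
  qed
  finally show ?thesis .
qed

lemma sum_overlap_std_basis: "(\<Sum>i<d. \<Sum>j<d. cmod (overlap d std_basis std_basis i j)) = real d"
proof -
  have "overlap d std_basis std_basis i j = (if i = j then 1 else 0)" if "i < d" "j < d" for i j
    using that unfolding overlap_def std_basis_def
    by (cases "i = j") (simp_all add: delta_sum_simps cong: if_cong)
  then show ?thesis
    by (simp add: if_distrib[of norm] cong: if_cong)
qed

lemma sum_abs_scaled_outer_plus_diag:
  fixes a :: "nat \<Rightarrow> nat \<Rightarrow> real" and g b :: real
  assumes a0: "\<And>i j. a i j \<ge> 0" and row: "\<And>i. i < d \<Longrightarrow> (\<Sum>j<d. (a i j)\<^sup>2) = 1"
    and gb: "g + b \<ge> 0" and b0: "b \<ge> 0" and one: "real d * g + (real d)\<^sup>2 * b = 1"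
  shows "(\<Sum>i<d. \<Sum>j<d. \<Sum>m<d. \<Sum>n<d. \<bar>g * a m n * a i j + b * (if i = m \<and> j = n then 1 else 0)\<bar>)
     = 1 + \<bar>g\<bar> * ((\<Sum>i<d. \<Sum>j<d. a i j)\<^sup>2 - real d)"
proof -
  have diag: "g * (a i j)\<^sup>2 + b \<ge> 0" if "i < d" "j < d" for i j
  proof (cases "g \<ge> 0")
    case False
    have "(a i j)\<^sup>2 \<le> 1"
      using abs_le_one_of_sum_squares[OF row[OF that(1)] that(2)] by (simp add: abs_square_le_1)
    then have "g \<le> g * (a i j)\<^sup>2" using False by (simp add: mult_le_cancel_left1)
    then show ?thesis using gb by simp
  qed (use b0 in simp)
  have entry: "\<bar>g * a m n * a i j + b * (if i = m \<and> j = n then 1 else 0)\<bar>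
      = \<bar>g\<bar> * (a i j * a m n)
        + (if n = j then (if m = i then g * (a i j)\<^sup>2 + b - \<bar>g\<bar> * (a i j)\<^sup>2 else 0) else 0)"
    if "i < d" "j < d" for i j m n
  proof (cases "i = m \<and> j = n")
    case True
    then show ?thesis using diag[OF that] by (auto simp: power2_eq_square)
  next
    case False
    then show ?thesis using a0[of m n] a0[of i j] by (auto simp: abs_mult)
  qed
  have "(\<Sum>i<d. \<Sum>j<d. \<Sum>m<d. \<Sum>n<d. \<bar>g * a m n * a i j + b * (if i = m \<and> j = n then 1 else 0)\<bar>)
     = (\<Sum>i<d. \<Sum>j<d. \<Sum>m<d. \<Sum>n<d. \<bar>g\<bar> * (a i j * a m n))
       + (\<Sum>i<d. \<Sum>j<d. g * (a i j)\<^sup>2 + b - \<bar>g\<bar> * (a i j)\<^sup>2)"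
    by (simp add: entry sum.distrib sum.delta sum.delta' cong: if_cong)
  also have "(\<Sum>i<d. \<Sum>j<d. \<Sum>m<d. \<Sum>n<d. \<bar>g\<bar> * (a i j * a m n))
      = \<bar>g\<bar> * (\<Sum>i<d. \<Sum>j<d. a i j * (\<Sum>m<d. \<Sum>n<d. a m n))"
    by (simp add: sum_distrib_left)
  also have "\<dots> = \<bar>g\<bar> * (\<Sum>i<d. \<Sum>j<d. a i j)\<^sup>2"
    by (simp add: power2_eq_square sum_distrib_right)
  also have "(\<Sum>i<d. \<Sum>j<d. g * (a i j)\<^sup>2 + b - \<bar>g\<bar> * (a i j)\<^sup>2) = (\<Sum>i<d. g + real d * b - \<bar>g\<bar>)"
    using row by (simp add: sum.distrib sum_subtractf flip: sum_distrib_left)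
  finally show ?thesis
    using one by (simp add: algebra_simps power2_eq_square)
qed

lemma cmod_overlap_weight:
  "cmod (complex_of_real g * (H m n * cnj (H i j)) + complex_of_real t * (if i = m \<and> j = n then 1 else 0))
    = \<bar>g * cmod (H m n) * cmod (H i j) + t * (if i = m \<and> j = n then 1 else 0)\<bar>"
proof (cases "i = m \<and> j = n")
  case True
  have "H m n * cnj (H m n) = complex_of_real (cmod (H m n) * cmod (H m n))"
    by (simp flip: complex_norm_square add: power2_eq_square)
  then have eq: "complex_of_real g * (H m n * cnj (H m n)) + complex_of_real t
      = complex_of_real (g * cmod (H m n) * cmod (H m n) + t)"
    by (simp add: mult.assoc)
  from True have "i = m" "j = n" by simp_all
  then show ?thesis
    by (simp only: simp_thms if_True mult_1_right eq norm_of_real)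
next
  case False
  show ?thesis
    unfolding if_not_P[OF False] by (simp add: norm_mult abs_mult)
qed

lemma negativity_VAB:
  assumes u: "onb d u" and v: "onb d v" and d: "2 \<le> d" and p: "0 \<le> p" "p \<le> 1"
  shows "negativity (d*d) (d*d) (VAB d u v * isotropic d p * adj (VAB d u v))
    = \<bar>iso_coh d p\<bar> * ((\<Sum>i<d. \<Sum>j<d. cmod (overlap d u v i j))\<^sup>2 - real d) / 2"
proof -
  let ?M = "ptrans (d*d) (d*d) (VAB d u v * isotropic d p * adj (VAB d u v))"
  let ?g = "iso_coh d p" and ?t = "iso_noise d p" and ?H = "overlap d u v"
  have d0: "0 < d" using d by simp
  have "trace_norm ?M = trace_norm (adj (WAB d u v) * ?M * WAB d u v)"
    using trace_norm_unitary_conj[OF _ WAB_carrier WAB_unitary[OF u v], of ?M] ptrans_carrier[of "d*d" "d*d"]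
    by (simp add: mult.assoc)
  also have "\<dots> = (\<Sum>y\<in>cube4 d. cmod ((\<lambda>(i,j,m,n). complex_of_real ?g * (?H m n * cnj (?H i j))
      + complex_of_real ?t * (if i = m \<and> j = n then 1 else 0)) y))"
    unfolding WAB_monomialises[OF u v d0]
    by (rule trace_norm_coded_monomial[OF bij_betw_dec4]) (auto simp: inj_on_def cube4_def)
  also have "\<dots> = (\<Sum>i<d. \<Sum>j<d. \<Sum>m<d. \<Sum>n<d.
      \<bar>?g * cmod (?H m n) * cmod (?H i j) + ?t * (if i = m \<and> j = n then 1 else 0)\<bar>)"
    by (simp only: sum_cube4 prod.case cmod_overlap_weight)
  also have "\<dots> = 1 + \<bar>?g\<bar> * ((\<Sum>i<d. \<Sum>j<d. cmod (?H i j))\<^sup>2 - real d)"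
    using overlap_row_norm[OF u v] iso_weights[OF d p]
    by (intro sum_abs_scaled_outer_plus_diag) auto
  finally show ?thesis
    by (simp add: negativity_def)
qed

lemma negativity_VAB_ge:
  assumes "onb d u" "onb d v" "2 \<le> d" "0 \<le> p" "p \<le> 1"
  shows "\<bar>iso_coh d p\<bar> * ((real d)\<^sup>2 - real d) / 2
    \<le> negativity (d*d) (d*d) (VAB d u v * isotropic d p * adj (VAB d u v))"
proof -
  have "(real d)\<^sup>2 \<le> (\<Sum>i<d. \<Sum>j<d. cmod (overlap d u v i j))\<^sup>2"
    using overlap_sum_ge[OF assms(1,2)] by (intro power_mono) auto
  then show ?thesis
    unfolding negativity_VAB[OF assms] by (intro divide_right_mono mult_left_mono) auto
qed

lemma negativity_VAB_std_basis:
  assumes "2 \<le> d" "0 \<le> p" "p \<le> 1"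
  shows "negativity (d*d) (d*d) (VAB d std_basis std_basis * isotropic d p * adj (VAB d std_basis std_basis))
    = \<bar>iso_coh d p\<bar> * ((real d)\<^sup>2 - real d) / 2"
  unfolding negativity_VAB[OF onb_std_basis onb_std_basis assms] sum_overlap_std_basis by simp

theorem theorem14:
  fixes d :: nat and p :: real
  assumes "d \<ge> 2" and "0 \<le> p" and "p \<le> 1"
  shows "Q_A d (isotropic d p) = \<bar>p * real d ^ 2 - 1\<bar> / (2 * (real d + 1))
       \<and> Q_AB d (isotropic d p) = \<bar>p * real d ^ 2 - 1\<bar> / (2 * (real d + 1))"
proof
  let ?N = "\<bar>iso_coh d p\<bar> * ((real d)\<^sup>2 - real d) / 2"
  let ?negAB = "\<lambda>uv. negativity (d*d) (d*d)
    (VAB d (fst uv) (snd uv) * isotropic d p * adj (VAB d (fst uv) (snd uv)))"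
  have N_eq: "?N = \<bar>p * real d ^ 2 - 1\<bar> / (2 * (real d + 1))"
    by (rule iso_weights(4)[OF assms])
  have "(\<lambda>u. negativity (d*d) d (VA d u * isotropic d p * adj (VA d u))) ` {u. onb d u} = {?N}"
    using negativity_VA[OF _ assms] onb_std_basis by force
  then show "Q_A d (isotropic d p) = \<bar>p * real d ^ 2 - 1\<bar> / (2 * (real d + 1))"
    unfolding Q_A_def N_eq by simp
  show "Q_AB d (isotropic d p) = \<bar>p * real d ^ 2 - 1\<bar> / (2 * (real d + 1))"
    unfolding Q_AB_def N_eq[symmetric]
  proof (rule cInf_eq_minimum)
    show "?N \<in> ?negAB ` {(u,v). onb d u \<and> onb d v}"
      using negativity_VAB_std_basis[OF assms] onb_std_basis
      by (intro image_eqI[where x = "(std_basis, std_basis)"]) auto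
  next
    fix x assume "x \<in> ?negAB ` {(u,v). onb d u \<and> onb d v}"
    then obtain u v where "onb d u" "onb d v"
      and "x = negativity (d*d) (d*d) (VAB d u v * isotropic d p * adj (VAB d u v))"
      by auto
    then show "?N \<le> x" using negativity_VAB_ge[OF _ _ assms] by simp
  qed
qed

end
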